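(* Under the full-support assumption and with $\eta L<\tfrac12$, for every $t\ge1$, \[ \Theta_t-\Theta_{t+1}\ge C_1\max\{\hat K^{(t+1)},K^{(t+1)}\}^2,\qquad C_1=\frac{1-4\eta^2L^2}{(\sqrt2\,\eta L+2e^{2\eta L})^2}. \]
   Context: $\mathbb{A}$ finite, $\Delta(\mathbb{A})$ the simplex, $\bm P$ skew-symmetric, $L=\max_{a,a'}|P_{a,a'}|$. $\mathbb{M}$: Nash equilibria, i.e. ${\bm\pi}\in\Delta(\mathbb{A})$ with $\max_a(\bm P{\bm\pi})_a\le0$. Full-support assumption: every $a$ has some ${\bm\pi}\in\mathbb{M}$ with $\pi_a>0$. $p({\bm\pi})=\arg\min_{{\bm\pi}'\in\mathbb{M}}D_{\mathrm{KL}}({\bm\pi}'\|{\bm\pi})$ for positive ${\bm\pi}$. OMWU with $\eta>0$: $\hat{\bm\pi}^{(1)}$ positive, ${\bm\pi}^{(0)}=\hat{\bm\pi}^{(1)}$, for $t\ge1$ $\pi^{(t)}_a\propto\hat\pi^{(t)}_a e^{\eta(\bm P{\bm\pi}^{(t-1)})_a}$, $\hat\pi^{(t+1)}_a\propto\hat\pi^{(t)}_a e^{\eta(\bm P{\bm\pi}^{(t)})_a}$ (normalized). ${\bm\pi}^*=p(\hat{\bm\pi}^{(1)})$. $\Theta_t=D_{\mathrm{KL}}({\bm\pi}^*\|\hat{\bm\pi}^{(t)})+4\eta^2L^2D_{\mathrm{KL}}(\hat{\bm\pi}^{(t)}\|{\bm\pi}^{(t-1)})$. $K^{(t)}=\max_a\hat\pi^{(t)}_a|\eta(\bm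 P{\bm\pi}^{(t-1)})_a|$ (so $K^{(t+1)}=\max_a\hat\pi^{(t+1)}_a|\eta(\bm P{\bm\pi}^{(t)})_a|$), $\hat K^{(t+1)}=\max_a\hat\pi^{(t)}_a|\eta(\bm P{\bm\pi}^{(t)})_a|$. *)

theory Defs
  imports "HOL-Analysis.Analysis"
begin

definition prob_simplex :: "('a::finite \<Rightarrow> real) set" where
  "prob_simplex = {\<pi>. (\<forall>a. 0 \<le> \<pi> a) \<and> (\<Sum>a\<in>UNIV. \<pi> a) = 1}"

definition skew_symmetric :: "('a \<Rightarrow> 'a \<Rightarrow> real) \<Rightarrow> bool" where
  "skew_symmetric P \<longleftrightarrow> (\<forall>a b. P a b = - P b a)"

definition matvec :: "('a::finite \<Rightarrow> 'a \<Rightarrow> real) \<Rightarrow> ('a \<Rightarrow> real) \<Rightarrow> 'a \<Rightarrow> real" where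
  "matvec P \<pi> a = (\<Sum>b\<in>UNIV. P a b * \<pi> b)"

definition Lconst :: "('a::finite \<Rightarrow> 'a \<Rightarrow> real) \<Rightarrow> real" where
  "Lconst P = Max {\<bar>P a b\<bar> | a b. True}"

definition nash_set :: "('a::finite \<Rightarrow> 'a \<Rightarrow> real) \<Rightarrow> ('a \<Rightarrow> real) set" where
  "nash_set P = {\<pi> \<in> prob_simplex. Max (range (matvec P \<pi>)) \<le> 0}"

definition KL :: "('a::finite \<Rightarrow> real) \<Rightarrow> ('a \<Rightarrow> real) \<Rightarrow> real" where
  "KL p q = (\<Sum>a\<in>UNIV. if p a = 0 then 0 else p a * ln (p a / q a))"

definition kl_proj :: "('a::finite \<Rightarrow> 'a \<Rightarrow> real) \<Rightarrow> ('a \<Rightarrow> real) \<Rightarrow> ('a \<Rightarrow> real)" where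
  "kl_proj P \<pi> = (SOME \<pi>'. is_arg_min (\<lambda>\<sigma>. KL \<sigma> \<pi>) (\<lambda>\<sigma>. \<sigma> \<in> nash_set P) \<pi>')"

definition mw_step :: "real \<Rightarrow> ('a::finite \<Rightarrow> 'a \<Rightarrow> real) \<Rightarrow> ('a \<Rightarrow> real) \<Rightarrow> ('a \<Rightarrow> real) \<Rightarrow> 'a \<Rightarrow> real" where
  "mw_step \<eta> P base \<sigma> a =
     base a * exp (\<eta> * matvec P \<sigma> a) / (\<Sum>b\<in>UNIV. base b * exp (\<eta> * matvec P \<sigma> b))"

text \<open>Potential Theta_t, given hat pi^(t) and pi^(t-1).\<close>
definition Theta :: "real \<Rightarrow> real \<Rightarrow> ('a::finite \<Rightarrow> real) \<Rightarrow> ('a \<Rightarrow> real) \<Rightarrow> ('a \<Rightarrow> real) \<Rightarrow> real" where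
  "Theta \<eta> L \<pi>s hat prev = KL \<pi>s hat + 4 * \<eta>^2 * L^2 * KL hat prev"

text \<open>max_a w_a |eta (P sigma)_a|, used for K^(t) (w = hat pi^(t), sigma = pi^(t-1))
  and hat K^(t+1) (w = hat pi^(t), sigma = pi^(t)).\<close>
definition Kval :: "real \<Rightarrow> ('a::finite \<Rightarrow> 'a \<Rightarrow> real) \<Rightarrow> ('a \<Rightarrow> real) \<Rightarrow> ('a \<Rightarrow> real) \<Rightarrow> real" where
  "Kval \<eta> P w \<sigma> = Max (range (\<lambda>a. w a * \<bar>\<eta> * matvec P \<sigma> a\<bar>))"

end

theory Submission
  imports Defs "HOL-Real_Asymp.Real_Asymp" "HOL-Probability.Hoeffding"
begin

(* Write h = hat pi^(t), r = pi^(t-1), q = pi^(t), p = hat pi^(t+1). Both q and p are exponential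
   tilts of h, so KL(u || q) and KL(u || p) differ from KL(u || h) by a term linear in u plus a
   log-partition constant. Combining these identities gives the three-point identity
   KL(pi* || h) - KL(pi* || p) = eta <pi*, P q> + KL(q || h) - KL(q || p), where <pi*, P q> >= 0
   because pi* is a Nash equilibrium, and the formula KL(p || q) + KL(q || p) = eta <p - q, P (q - r)>.
   With Pinsker's inequality the latter is at most (eta L |q - r|_1)^2 <= 4 eta^2 L^2 (KL(q || h) +
   KL(h || r)), whence Theta_t - Theta_(t+1) >= (1 - 4 eta^2 L^2) D with D = KL(p || q) + KL(q || h).
   For the K-values write p_a = h_a exp x_a with x_a = eta (P q)_a - ln Z: both h_a |x_a| and
   p_a |x_a| are at most |p_a - h_a| exp (2 eta L), and ln Z lies between eta <h, P q> and
   eta <p, P q>, which are small in l1 distance; Pinsker once more bounds both K-values by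
   (sqrt 2 eta L + 2 exp (2 eta L)) sqrt D. *)

lemma sum_sq_le_twice_sq_sum:
  fixes x y :: real
  shows "(x + y)\<^sup>2 \<le> 2 * x\<^sup>2 + 2 * y\<^sup>2"
  using zero_le_power2[of "x - y"] by (simp add: power2_eq_square algebra_simps)

lemma max_one_exp_mult_abs_le:
  fixes x :: real
  shows "max 1 (exp x) * \<bar>x\<bar> \<le> \<bar>exp x - 1\<bar> * exp \<bar>x\<bar>"
proof (cases "x \<ge> 0")
  case True
  moreover have "x \<le> exp x - 1" using exp_ge_add_one_self[of x] by linarith
  moreover have "1 \<le> exp x" using True by simp
  ultimately show ?thesis by (simp add: max_def mult.commute mult_right_mono)
next
  case False
  then have "- x \<le> exp (- x) - 1" "exp x < 1" using exp_ge_add_one_self[of "- x"] by auto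
  moreover have "(1 - exp x) * exp (- x) = exp (- x) - 1" by (simp add: algebra_simps exp_minus_inverse)
  ultimately show ?thesis using False by (simp add: max_def)
qed

lemma tilted_weight_mult_abs_le:
  fixes h w x :: real
  assumes "h > 0" and "w = h \<or> w = h * exp x"
  shows "w * \<bar>x\<bar> \<le> \<bar>h * exp x - h\<bar> * exp \<bar>x\<bar>"
proof -
  have "h * exp x - h = h * (exp x - 1)"
    by (simp add: algebra_simps)
  then have abs_diff: "\<bar>h * exp x - h\<bar> = h * \<bar>exp x - 1\<bar>"
    using assms(1) by (simp add: abs_mult)
  have "w \<le> h * max 1 (exp x)"
    using assms by (auto intro: mult_left_mono)
  then have "w * \<bar>x\<bar> \<le> h * max 1 (exp x) * \<bar>x\<bar>"
    by (rule mult_right_mono) simp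
  also have "\<dots> \<le> h * (\<bar>exp x - 1\<bar> * exp \<bar>x\<bar>)"
    using assms(1) max_one_exp_mult_abs_le[of x] by (simp add: mult.assoc)
  finally show ?thesis
    unfolding abs_diff by (simp add: mult.assoc)
qed

lemma sqrt_bounds_of_sq_le:
  fixes x y a b :: real
  assumes "0 \<le> x" "0 \<le> y" "x\<^sup>2 \<le> 2 * a" "y\<^sup>2 \<le> 2 * b"
  shows "x + y \<le> 2 * sqrt (a + b)" "max x y \<le> sqrt 2 * sqrt (a + b)"
proof -
  have "(x + y)\<^sup>2 \<le> 2 * x\<^sup>2 + 2 * y\<^sup>2" by (rule sum_sq_le_twice_sq_sum)
  also have "\<dots> \<le> 4 * (a + b)" using assms by simp
  finally have "x + y \<le> sqrt (4 * (a + b))" by (rule real_le_rsqrt)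
  then show "x + y \<le> 2 * sqrt (a + b)" unfolding real_sqrt_mult by simp
  have "0 \<le> 2 * a" "0 \<le> 2 * b"
    using order_trans[OF zero_le_power2 assms(3)] order_trans[OF zero_le_power2 assms(4)] .
  then have "(max x y)\<^sup>2 \<le> 2 * (a + b)" using assms by (simp add: max_def)
  then have "max x y \<le> sqrt (2 * (a + b))" by (rule real_le_rsqrt)
  then show "max x y \<le> sqrt 2 * sqrt (a + b)" unfolding real_sqrt_mult .
qed

section \<open>Kullback-Leibler divergence and Pinsker's inequality\<close>

lemma prob_simplexD:
  assumes "p \<in> prob_simplex"
  shows "0 \<le> p a" "(\<Sum>a\<in>UNIV. p a) = 1"
  using assms by (auto simp: prob_simplex_def)

lemma prob_simplex_le_one:
  assumes "p \<in> prob_simplex"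
  shows "p a \<le> 1"
  using member_le_sum[of a UNIV p] prob_simplexD[OF assms] by simp

lemma KL_eq_sum: "KL p q = (\<Sum>a\<in>UNIV. p a * ln (p a / q a))"
  unfolding KL_def by (intro sum.cong) auto

lemma KL_self: "KL p p = 0"
  unfolding KL_eq_sum by (intro sum.neutral) (auto simp: divide_self_if)

lemma KL_nonneg:
  assumes p: "p \<in> prob_simplex" and q: "q \<in> prob_simplex" and q_pos: "\<And>a. q a > 0"
  shows "KL p q \<ge> 0"
proof -
  have "p a - q a \<le> p a * ln (p a / q a)" for a
  proof (cases "p a = 0")
    case True
    then show ?thesis using q_pos[of a] by simp
  next
    case False
    then have pa: "p a > 0" using prob_simplexD(1)[OF p, of a] by simp
    have "ln (q a / p a) \<le> q a / p a - 1"
      using q_pos[of a] pa by (intro ln_le_minus_one) auto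
    also have "ln (q a / p a) = - ln (p a / q a)"
      using q_pos[of a] pa by (simp add: ln_div)
    finally have "p a * (1 - q a / p a) \<le> p a * ln (p a / q a)"
      using pa by (intro mult_left_mono) auto
    moreover have "p a * (1 - q a / p a) = p a - q a"
      using pa by (simp add: field_simps)
    ultimately show ?thesis by simp
  qed
  then have "(\<Sum>a\<in>UNIV. p a - q a) \<le> KL p q"
    unfolding KL_eq_sum by (intro sum_mono)
  then show ?thesis using prob_simplexD(2)[OF p] prob_simplexD(2)[OF q] by (simp add: sum_subtractf)
qed

definition exp_tilt :: "('a::finite \<Rightarrow> real) \<Rightarrow> ('a \<Rightarrow> real) \<Rightarrow> 'a \<Rightarrow> real" where
  "exp_tilt h y a = h a * exp (y a) / (\<Sum>b\<in>UNIV. h b * exp (y b))"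

lemma exp_tilt_normalizer_pos:
  fixes h :: "'a::finite \<Rightarrow> real"
  assumes "\<And>a. h a > 0"
  shows "(\<Sum>b\<in>UNIV. h b * exp (y b)) > 0"
  using assms by (intro sum_pos) auto

lemma exp_tilt_pos:
  assumes "\<And>a. h a > 0"
  shows "exp_tilt h y a > 0"
  using exp_tilt_normalizer_pos[of h y, OF assms] assms unfolding exp_tilt_def by auto

lemma exp_tilt_simplex:
  assumes "\<And>a. h a > 0"
  shows "exp_tilt h y \<in> prob_simplex"
  using exp_tilt_normalizer_pos[of h y, OF assms] exp_tilt_pos[of h y, OF assms]
  unfolding prob_simplex_def exp_tilt_def
  by (auto simp: sum_divide_distrib[symmetric] less_imp_le)

lemma KL_exp_tilt:
  fixes h u :: "'a::finite \<Rightarrow> real"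
  assumes u: "u \<in> prob_simplex" and h: "\<And>a. h a > 0"
  shows "KL u (exp_tilt h y) = KL u h - (\<Sum>a\<in>UNIV. u a * y a) + ln (\<Sum>b\<in>UNIV. h b * exp (y b))"
proof -
  define Z where "Z = (\<Sum>b\<in>UNIV. h b * exp (y b))"
  have Z: "Z > 0" unfolding Z_def by (rule exp_tilt_normalizer_pos[OF h])
  have "u a * ln (u a / exp_tilt h y a) = u a * ln (u a / h a) - u a * y a + u a * ln Z" for a
  proof (cases "u a = 0")
    case False
    then have "u a > 0" using prob_simplexD(1)[OF u, of a] by simp
    moreover have "u a / exp_tilt h y a = (u a / h a) * (Z / exp (y a))"
      using h[of a] Z unfolding exp_tilt_def Z_def[symmetric] by (simp add: field_simps)
    ultimately have "ln (u a / exp_tilt h y a) = ln (u a / h a) - y a + ln Z"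
      using h[of a] Z by (simp add: ln_div ln_mult)
    then show ?thesis by (simp add: distrib_left right_diff_distrib)
  qed simp
  then have "KL u (exp_tilt h y) = KL u h - (\<Sum>a\<in>UNIV. u a * y a) + (\<Sum>a\<in>UNIV. u a) * ln Z"
    unfolding KL_eq_sum by (simp add: sum.distrib sum_subtractf sum_distrib_right)
  then show ?thesis using prob_simplexD(2)[OF u] unfolding Z_def by simp
qed

lemma KL_ge_variational:
  fixes p q :: "'a::finite \<Rightarrow> real"
  assumes p: "p \<in> prob_simplex" and q: "\<And>a. q a > 0"
  shows "(\<Sum>a\<in>UNIV. p a * y a) - ln (\<Sum>b\<in>UNIV. q b * exp (y b)) \<le> KL p q"
  using KL_nonneg[OF p exp_tilt_simplex[of q y, OF q] exp_tilt_pos[of q y, OF q]]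
    KL_exp_tilt[of p q y, OF p q]
  by simp

definition l1_dist :: "('a::finite \<Rightarrow> real) \<Rightarrow> ('a \<Rightarrow> real) \<Rightarrow> real" where
  "l1_dist u v = (\<Sum>a\<in>UNIV. \<bar>u a - v a\<bar>)"

text \<open>The variational formula with the test function 4 d on A = {q \<le> p} and 0 elsewhere,
  where d = p(A) - q(A) is half the l1 distance, together with Hoeffding's bound on the
  log-moment generating function of a Bernoulli variable.\<close>
lemma Pinsker_inequality:
  fixes p q :: "'a::finite \<Rightarrow> real"
  assumes p: "p \<in> prob_simplex" and q: "q \<in> prob_simplex" and q_pos: "\<And>a. q a > 0"
  shows "(l1_dist p q)\<^sup>2 \<le> 2 * KL p q"
proof -
  define A where "A = {a. q a \<le> p a}"
  define sp where "sp = (\<Sum>a\<in>A. p a)"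
  define sq where "sq = (\<Sum>a\<in>A. q a)"
  define d where "d = sp - sq"
  have indicator_sum: "(\<Sum>a\<in>UNIV. if a \<in> A then f a else 0) = sum f A" for f :: "'a \<Rightarrow> real"
    using sum.inter_restrict[of UNIV f A] by simp
  have d_nonneg: "d \<ge> 0"
    unfolding d_def sp_def sq_def by (simp add: sum_subtractf[symmetric] A_def) (rule sum_nonneg, simp)
  have sq_nonneg: "sq \<ge> 0"
    unfolding sq_def using q_pos by (simp add: sum_nonneg less_imp_le)
  have "l1_dist p q = (\<Sum>a\<in>UNIV. 2 * (if a \<in> A then p a - q a else 0) - (p a - q a))"
    unfolding l1_dist_def by (intro sum.cong) (auto simp: A_def)
  also have "\<dots> = 2 * d"
    using prob_simplexD(2)[OF p] prob_simplexD(2)[OF q]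
    by (simp add: sum_subtractf sum_distrib_left[symmetric] indicator_sum d_def sp_def sq_def)
  finally have l1_eq: "l1_dist p q = 2 * d" .
  define y where "y = (\<lambda>a. if a \<in> A then 4 * d else 0)"
  have "(\<Sum>a\<in>UNIV. p a * y a) = 4 * d * sp"
    unfolding y_def sp_def
    by (simp add: if_distrib indicator_sum sum_distrib_right[symmetric] cong: if_cong)
  moreover have "(\<Sum>b\<in>UNIV. q b * exp (y b)) = (\<Sum>b\<in>UNIV. q b + (if b \<in> A then (exp (4 * d) - 1) * q b else 0))"
    by (intro sum.cong) (auto simp: y_def algebra_simps)
  then have "(\<Sum>b\<in>UNIV. q b * exp (y b)) = 1 + sq * (exp (4 * d) - 1)"
    using prob_simplexD(2)[OF q]
    by (simp add: sum.distrib indicator_sum sum_distrib_right[symmetric] sq_def mult.commute)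
  ultimately have "4 * d * sp - ln (1 + sq * (exp (4 * d) - 1)) \<le> KL p q"
    using KL_ge_variational[of p q y, OF p q_pos] by simp
  moreover have "- (4 * d) * sq + ln (1 + sq * (exp (4 * d) - 1)) \<le> (4 * d)\<^sup>2 / 8"
    using Hoeffdings_lemma_aux[of "4 * d" sq] d_nonneg sq_nonneg by simp
  ultimately have "2 * d\<^sup>2 \<le> KL p q"
    unfolding d_def by (simp add: power2_eq_square algebra_simps)
  then show ?thesis unfolding l1_eq by (simp add: power2_eq_square)
qed

lemma l1_dist_triangle: "l1_dist u w \<le> l1_dist u v + l1_dist v w"
  unfolding l1_dist_def sum.distrib[symmetric] by (intro sum_mono) linarith

lemma abs_le_l1_dist: "\<bar>u a - v a\<bar> \<le> l1_dist u v"
  unfolding l1_dist_def by (rule member_le_sum) auto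

lemma l1_dist_commute: "l1_dist u v = l1_dist v u"
  unfolding l1_dist_def by (simp add: abs_minus_commute)

lemma l1_dist_sq_le_KL_chain:
  assumes "u \<in> prob_simplex" "v \<in> prob_simplex" "w \<in> prob_simplex"
    and "\<And>a. v a > 0" "\<And>a. w a > 0"
  shows "(l1_dist u w)\<^sup>2 \<le> 4 * KL u v + 4 * KL v w"
proof -
  have "(l1_dist u w)\<^sup>2 \<le> (l1_dist u v + l1_dist v w)\<^sup>2"
    using l1_dist_triangle[of u w v] by (intro power_mono) (auto simp: l1_dist_def sum_nonneg)
  also have "\<dots> \<le> 2 * (l1_dist u v)\<^sup>2 + 2 * (l1_dist v w)\<^sup>2"
    by (rule sum_sq_le_twice_sq_sum)
  finally show ?thesis
    using Pinsker_inequality[OF assms(1,2,4)] Pinsker_inequality[OF assms(2,3,5)] by linarith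
qed

section \<open>Skew-symmetric games\<close>

definition payoff :: "('a::finite \<Rightarrow> 'a \<Rightarrow> real) \<Rightarrow> ('a \<Rightarrow> real) \<Rightarrow> ('a \<Rightarrow> real) \<Rightarrow> real" where
  "payoff P u v = (\<Sum>a\<in>UNIV. u a * matvec P v a)"

lemma abs_le_Lconst: "\<bar>P a b\<bar> \<le> Lconst P"
proof -
  have range_eq: "{\<bar>P a b\<bar> | a b. True} = (\<lambda>(a, b). \<bar>P a b\<bar>) ` UNIV" by auto
  show ?thesis unfolding Lconst_def range_eq by (rule Max_ge) auto
qed

lemma payoff_diff_left: "payoff P (\<lambda>a. u a - v a) w = payoff P u w - payoff P v w"
  unfolding payoff_def by (simp add: left_diff_distrib sum_subtractf)

lemma payoff_diff_right: "payoff P u (\<lambda>b. v b - w b) = payoff P u v - payoff P u w"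
  unfolding payoff_def matvec_def by (simp add: right_diff_distrib sum_subtractf)

lemma payoff_eq_double_sum: "payoff P u v = (\<Sum>a\<in>UNIV. \<Sum>b\<in>UNIV. u a * P a b * v b)"
  unfolding payoff_def matvec_def by (simp add: sum_distrib_left mult.assoc)

lemma payoff_swap:
  assumes "skew_symmetric P"
  shows "payoff P u v = - payoff P v u"
proof -
  have "payoff P u v = (\<Sum>b\<in>UNIV. \<Sum>a\<in>UNIV. u a * P a b * v b)"
    unfolding payoff_eq_double_sum by (rule sum.swap)
  also have "\<dots> = (\<Sum>b\<in>UNIV. \<Sum>a\<in>UNIV. - (v b * P b a * u a))"
  proof (intro sum.cong refl)
    fix a b
    have "P a b = - P b a" using assms unfolding skew_symmetric_def by blast
    then show "u a * P a b * v b = - (v b * P b a * u a)" by simp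
  qed
  finally show ?thesis unfolding payoff_eq_double_sum by (simp add: sum_negf)
qed

lemma payoff_self_eq_zero:
  assumes "skew_symmetric P"
  shows "payoff P u u = 0"
  using payoff_swap[OF assms, of u u] by simp

lemma abs_matvec_le:
  assumes P_bound: "\<And>a b. \<bar>P a b\<bar> \<le> L"
  shows "\<bar>matvec P v a\<bar> \<le> L * (\<Sum>b\<in>UNIV. \<bar>v b\<bar>)"
proof -
  have "\<bar>matvec P v a\<bar> \<le> (\<Sum>b\<in>UNIV. \<bar>P a b\<bar> * \<bar>v b\<bar>)"
    unfolding matvec_def abs_mult[symmetric] by (rule sum_abs)
  also have "\<dots> \<le> (\<Sum>b\<in>UNIV. L * \<bar>v b\<bar>)"
    by (intro sum_mono mult_right_mono P_bound) auto
  finally show ?thesis by (simp add: sum_distrib_left)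
qed

lemma abs_payoff_le:
  assumes "\<And>a b. \<bar>P a b\<bar> \<le> L"
  shows "\<bar>payoff P u v\<bar> \<le> L * (\<Sum>a\<in>UNIV. \<bar>u a\<bar>) * (\<Sum>b\<in>UNIV. \<bar>v b\<bar>)"
proof -
  have "\<bar>payoff P u v\<bar> \<le> (\<Sum>a\<in>UNIV. \<bar>u a\<bar> * \<bar>matvec P v a\<bar>)"
    unfolding payoff_def abs_mult[symmetric] by (rule sum_abs)
  also have "\<dots> \<le> (\<Sum>a\<in>UNIV. \<bar>u a\<bar> * (L * (\<Sum>b\<in>UNIV. \<bar>v b\<bar>)))"
    by (intro sum_mono mult_left_mono abs_matvec_le assms) auto
  also have "\<dots> = L * (\<Sum>a\<in>UNIV. \<bar>u a\<bar>) * (\<Sum>b\<in>UNIV. \<bar>v b\<bar>)"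
    by (simp add: sum_distrib_left sum_distrib_right mult_ac)
  finally show ?thesis .
qed

lemma sum_abs_simplex:
  assumes "p \<in> prob_simplex"
  shows "(\<Sum>a\<in>UNIV. \<bar>p a\<bar>) = 1"
  using prob_simplexD[OF assms] by simp

lemma nash_set_iff: "s \<in> nash_set P \<longleftrightarrow> s \<in> prob_simplex \<and> (\<forall>a. matvec P s a \<le> 0)"
  unfolding nash_set_def by (auto simp: Max_le_iff)

lemma payoff_nash_nonneg:
  assumes "skew_symmetric P" and "s \<in> nash_set P" and "q \<in> prob_simplex"
  shows "payoff P s q \<ge> 0"
proof -
  have "payoff P q s \<le> 0"
    using assms(2,3) unfolding payoff_def nash_set_iff
    by (intro sum_nonpos) (simp add: mult_nonneg_nonpos prob_simplexD)
  then show ?thesis using payoff_swap[OF assms(1), of s q] by simp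
qed

lemma continuous_on_xlnx_div:
  fixes c :: real
  assumes "c > 0"
  shows "continuous_on {0..} (\<lambda>x. x * ln (x / c))"
  unfolding continuous_on_eq_continuous_within
proof
  fix x :: real
  assume "x \<in> {0..}"
  show "continuous (at x within {0..}) (\<lambda>x. x * ln (x / c))"
  proof (cases "x = 0")
    case True
    have "((\<lambda>x. x * ln x - x * ln c) \<longlongrightarrow> 0) (at_right 0)" by real_asymp
    moreover have "\<forall>\<^sub>F x in at_right 0. x * ln x - x * ln c = x * ln (x / c)"
      using assms by (auto simp: ln_div algebra_simps intro!: eventually_mono[OF eventually_at_right_less])
    ultimately have "((\<lambda>x. x * ln (x / c)) \<longlongrightarrow> 0) (at_right 0)"
      by (rule Lim_transform_eventually)
    then show ?thesis unfolding True continuous_within at_within_Ici_at_right by simp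
  next
    case False
    then have "continuous (at x) (\<lambda>x. x * ln (x / c))"
      using \<open>x \<in> {0..}\<close> assms by (intro continuous_intros) auto
    then show ?thesis by (rule continuous_at_imp_continuous_within)
  qed
qed

lemma compact_vec_nash_set: "compact {v :: real^'a. vec_nth v \<in> nash_set P}"
proof -
  define N where "N = {v :: real^'a. vec_nth v \<in> nash_set P}"
  have N_eq: "N = {v. \<forall>a. 0 \<le> v $ a} \<inter> {v. (\<Sum>a\<in>UNIV. v $ a) = 1}
                    \<inter> {v. \<forall>a. (\<Sum>b\<in>UNIV. P a b * v $ b) \<le> 0}"
    unfolding N_def nash_set_iff prob_simplex_def matvec_def by auto
  have "closed N" unfolding N_eq
    by (intro closed_Int closed_Collect_all closed_Collect_le closed_Collect_eq continuous_intros)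
  moreover have "N \<subseteq> cball 0 1"
  proof
    fix v assume "v \<in> N"
    then have "norm v \<le> (\<Sum>a\<in>UNIV. \<bar>v $ a\<bar>)" "(\<Sum>a\<in>UNIV. \<bar>v $ a\<bar>) = 1"
      using norm_le_l1_cart[of v] unfolding N_eq by auto
    then show "v \<in> cball 0 1" by simp
  qed
  then have "bounded N" by (rule bounded_subset[OF bounded_cball])
  ultimately show ?thesis unfolding N_def[symmetric] by (simp add: compact_eq_bounded_closed)
qed

text \<open>The minimum exists (so that the choice in kl_proj is not vacuous) because KL(-, q) is
  continuous on the compact Nash set.\<close>
lemma kl_proj_in_nash_set:
  assumes ne: "nash_set P \<noteq> {}" and q_pos: "\<And>a. q a > 0"
  shows "kl_proj P q \<in> nash_set P"
proof -
  have vec_nth_lambda [simp]: "vec_nth (vec_lambda s) = s" for s :: "'a \<Rightarrow> real"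
    by (rule ext) simp
  define N where "N = {v :: real^'a. vec_nth v \<in> nash_set P}"
  have "compact N" unfolding N_def by (rule compact_vec_nash_set)
  moreover obtain s where "s \<in> nash_set P" using ne by blast
  then have "vec_lambda s \<in> N" unfolding N_def by simp
  then have "N \<noteq> {}" by blast
  moreover have "continuous_on N (\<lambda>v. KL (vec_nth v) q)"
    unfolding KL_eq_sum
  proof (intro continuous_on_sum)
    fix a
    have nonneg: "(\<lambda>v. v $ a) ` N \<subseteq> {0..}"
      unfolding N_def nash_set_iff by (auto simp: prob_simplexD)
    show "continuous_on N (\<lambda>v. v $ a * ln (v $ a / q a))"
      by (rule continuous_on_compose2[OF continuous_on_xlnx_div[OF q_pos[of a]] _ nonneg])
        (intro continuous_intros)
  qed
  ultimately have "\<exists>v\<in>N. \<forall>w\<in>N. KL (vec_nth v) q \<le> KL (vec_nth w) q"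
    by (rule continuous_attains_inf)
  then obtain v where v: "vec_nth v \<in> nash_set P"
    and v_min: "\<And>w. vec_nth w \<in> nash_set P \<Longrightarrow> KL (vec_nth v) q \<le> KL (vec_nth w) q"
    unfolding N_def by blast
  have "is_arg_min (\<lambda>\<sigma>. KL \<sigma> q) (\<lambda>\<sigma>. \<sigma> \<in> nash_set P) (vec_nth v)"
    unfolding is_arg_min_linorder using v v_min[of "vec_lambda _"] by simp
  then have "is_arg_min (\<lambda>\<sigma>. KL \<sigma> q) (\<lambda>\<sigma>. \<sigma> \<in> nash_set P) (kl_proj P q)"
    unfolding kl_proj_def by (rule someI[where P = "is_arg_min (\<lambda>\<sigma>. KL \<sigma> q) (\<lambda>\<sigma>. \<sigma> \<in> nash_set P)"])
  then show ?thesis unfolding is_arg_min_def by blast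
qed

section \<open>Multiplicative weights updates\<close>

definition log_partition :: "real \<Rightarrow> ('a::finite \<Rightarrow> 'a \<Rightarrow> real) \<Rightarrow> ('a \<Rightarrow> real) \<Rightarrow> ('a \<Rightarrow> real) \<Rightarrow> real" where
  "log_partition \<eta> P h s = ln (\<Sum>b\<in>UNIV. h b * exp (\<eta> * matvec P s b))"

lemma mw_step_eq_exp_tilt: "mw_step \<eta> P h s = exp_tilt h (\<lambda>a. \<eta> * matvec P s a)"
  by (simp add: fun_eq_iff mw_step_def exp_tilt_def)

lemma mw_step_pos: "(\<And>a. h a > 0) \<Longrightarrow> mw_step \<eta> P h s a > 0"
  unfolding mw_step_eq_exp_tilt by (rule exp_tilt_pos)

lemma mw_step_simplex: "(\<And>a. h a > 0) \<Longrightarrow> mw_step \<eta> P h s \<in> prob_simplex"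
  unfolding mw_step_eq_exp_tilt by (rule exp_tilt_simplex)

lemma KL_mw_step:
  assumes "u \<in> prob_simplex" and "\<And>a. h a > 0"
  shows "KL u (mw_step \<eta> P h s) = KL u h - \<eta> * payoff P u s + log_partition \<eta> P h s"
  using KL_exp_tilt[of u h "\<lambda>a. \<eta> * matvec P s a", OF assms]
  by (simp add: mw_step_eq_exp_tilt payoff_def log_partition_def sum_distrib_left mult_ac)

lemma mw_step_eq_exp_log_partition:
  assumes "\<And>a. h a > 0"
  shows "mw_step \<eta> P h s a = h a * exp (\<eta> * matvec P s a - log_partition \<eta> P h s)"
  using exp_tilt_normalizer_pos[of h "\<lambda>b. \<eta> * matvec P s b", OF assms]
  unfolding mw_step_def log_partition_def by (simp add: exp_diff)

section \<open>One step of optimistic multiplicative weights\<close>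

locale omwu_step =
  fixes P :: "'a::finite \<Rightarrow> 'a \<Rightarrow> real" and \<eta> L :: real and h r q p :: "'a \<Rightarrow> real"
  assumes skew: "skew_symmetric P"
    and P_bound: "\<And>a b. \<bar>P a b\<bar> \<le> L"
    and eta_pos: "\<eta> > 0"
    and h_simplex: "h \<in> prob_simplex" and h_pos: "\<And>a. h a > 0"
    and r_simplex: "r \<in> prob_simplex" and r_pos: "\<And>a. r a > 0"
    and q_def: "q = mw_step \<eta> P h r"
    and p_def: "p = mw_step \<eta> P h q"
begin

lemma q_simplex: "q \<in> prob_simplex" and q_pos: "q a > 0"
  and p_simplex: "p \<in> prob_simplex" and p_pos: "p a > 0"
  unfolding p_def q_def using mw_step_simplex mw_step_pos h_pos by blast+

lemma L_nonneg: "L \<ge> 0"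
  using P_bound[of undefined undefined] by linarith

lemma KL_p_eq: "u \<in> prob_simplex \<Longrightarrow> KL u p = KL u h - \<eta> * payoff P u q + log_partition \<eta> P h q"
  unfolding p_def using KL_mw_step h_pos by blast

lemma KL_q_eq: "u \<in> prob_simplex \<Longrightarrow> KL u q = KL u h - \<eta> * payoff P u r + log_partition \<eta> P h r"
  unfolding q_def using KL_mw_step h_pos by blast

lemma KL_sym_eq: "KL p q + KL q p = \<eta> * payoff P (\<lambda>a. p a - q a) (\<lambda>a. q a - r a)"
proof -
  have "KL p q + KL q p = (KL p q - KL q q) + (KL q p - KL p p)"
    by (simp add: KL_self)
  also have "\<dots> = \<eta> * (payoff P p q - payoff P p r - payoff P q q + payoff P q r)"
    using KL_q_eq[OF p_simplex] KL_q_eq[OF q_simplex] KL_p_eq[OF q_simplex] KL_p_eq[OF p_simplex]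
    by (simp add: algebra_simps)
  finally show ?thesis by (simp add: payoff_diff_left payoff_diff_right)
qed

lemma KL_sym_le: "KL p q + KL q p \<le> (\<eta> * L * l1_dist q r)\<^sup>2"
proof -
  define S where "S = KL p q + KL q p"
  define c where "c = \<eta> * L * l1_dist q r"
  have c_nonneg: "c \<ge> 0"
    unfolding c_def l1_dist_def using eta_pos L_nonneg by (simp add: sum_nonneg)
  have upper: "S \<le> c * l1_dist p q"
  proof -
    have "S \<le> \<eta> * \<bar>payoff P (\<lambda>a. p a - q a) (\<lambda>a. q a - r a)\<bar>"
      unfolding S_def KL_sym_eq using eta_pos by simp
    also have "\<dots> \<le> \<eta> * (L * l1_dist p q * l1_dist q r)"
      using abs_payoff_le[OF P_bound] eta_pos unfolding l1_dist_def by (intro mult_left_mono) auto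
    finally show ?thesis unfolding c_def by (simp add: mult_ac)
  qed
  have lower: "(l1_dist p q)\<^sup>2 \<le> S"
    using Pinsker_inequality[OF p_simplex q_simplex q_pos] Pinsker_inequality[OF q_simplex p_simplex p_pos]
    unfolding S_def l1_dist_commute[of q p] by linarith
  have "l1_dist p q \<le> c"
  proof (rule ccontr)
    assume "\<not> l1_dist p q \<le> c"
    then have "c * l1_dist p q < l1_dist p q * l1_dist p q"
      using c_nonneg by (intro mult_strict_right_mono) auto
    then show False using upper lower by (simp add: power2_eq_square)
  qed
  then have "S \<le> c * c" using upper c_nonneg by (meson mult_left_mono order_trans)
  then show ?thesis unfolding S_def c_def by (simp add: power2_eq_square)
qed

lemma KL_three_point:
  assumes "u \<in> prob_simplex"
  shows "KL u h - KL u p = \<eta> * payoff P u q + KL q h - KL q p"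
  using KL_p_eq[OF assms] KL_p_eq[OF q_simplex] payoff_self_eq_zero[OF skew, of q] by simp

theorem Theta_decrease_ge_KL:
  assumes "u \<in> nash_set P"
  shows "Theta \<eta> L u h r - Theta \<eta> L u p q \<ge> (1 - 4 * \<eta>\<^sup>2 * L\<^sup>2) * (KL p q + KL q h)"
proof -
  define k where "k = \<eta>\<^sup>2 * L\<^sup>2"
  have u: "u \<in> prob_simplex" using assms unfolding nash_set_iff by blast
  have "\<eta> * payoff P u q \<ge> 0"
    using payoff_nash_nonneg[OF skew assms q_simplex] eta_pos by simp
  moreover have "KL p q + KL q p \<le> k * (4 * KL q h + 4 * KL h r)"
  proof -
    have "KL p q + KL q p \<le> k * (l1_dist q r)\<^sup>2"
      using KL_sym_le unfolding k_def by (simp add: power_mult_distrib)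
    also have "\<dots> \<le> k * (4 * KL q h + 4 * KL h r)"
      unfolding k_def
      by (intro mult_left_mono l1_dist_sq_le_KL_chain q_simplex h_simplex r_simplex h_pos r_pos) simp
    finally show ?thesis .
  qed
  moreover have "Theta \<eta> L u h r - Theta \<eta> L u p q = (KL u h - KL u p) + 4 * k * KL h r - 4 * k * KL p q"
    unfolding Theta_def k_def by (simp add: algebra_simps)
  moreover have "(1 - 4 * \<eta>\<^sup>2 * L\<^sup>2) * (KL p q + KL q h) = KL p q + KL q h - 4 * k * KL p q - 4 * k * KL q h"
    unfolding k_def by (simp add: algebra_simps)
  ultimately show ?thesis
    using KL_three_point[OF u] by (simp add: algebra_simps)
qed

lemma log_partition_bounds:
  "\<eta> * payoff P h q \<le> log_partition \<eta> P h q" "log_partition \<eta> P h q \<le> \<eta> * payoff P p q"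
  using KL_p_eq[OF h_simplex] KL_nonneg[OF h_simplex p_simplex p_pos]
    KL_p_eq[OF p_simplex] KL_nonneg[OF p_simplex h_simplex h_pos]
  by (simp_all add: KL_self)

lemma abs_log_partition_le: "\<bar>log_partition \<eta> P h q\<bar> \<le> \<eta> * L"
proof -
  have "\<bar>payoff P u q\<bar> \<le> L" if "u \<in> prob_simplex" for u
    using abs_payoff_le[of P L u q, OF P_bound] sum_abs_simplex[OF that] sum_abs_simplex[OF q_simplex]
    by simp
  then have "\<bar>\<eta> * payoff P u q\<bar> \<le> \<eta> * L" if "u \<in> prob_simplex" for u
    using that eta_pos by (simp add: abs_mult)
  then have "\<bar>\<eta> * payoff P h q\<bar> \<le> \<eta> * L" "\<bar>\<eta> * payoff P p q\<bar> \<le> \<eta> * L"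
    using h_simplex p_simplex by blast+
  then show ?thesis using log_partition_bounds by (simp add: abs_le_iff)
qed

lemma abs_log_partition_le_l1_dist:
  "\<bar>log_partition \<eta> P h q\<bar> \<le> \<eta> * L * max (l1_dist p q) (l1_dist q h)"
proof -
  define m where "m = max (l1_dist p q) (l1_dist q h)"
  have "\<bar>payoff P u q\<bar> \<le> L * l1_dist u q" for u
  proof -
    have "payoff P u q = payoff P (\<lambda>a. u a - q a) q"
      using payoff_self_eq_zero[OF skew, of q] by (simp add: payoff_diff_left)
    also have "\<bar>\<dots>\<bar> \<le> L * l1_dist u q"
      using abs_payoff_le[of P L "\<lambda>a. u a - q a" q, OF P_bound] sum_abs_simplex[OF q_simplex]
      unfolding l1_dist_def by simp
    finally show ?thesis .
  qed
  moreover have "L * l1_dist h q \<le> L * m" "L * l1_dist p q \<le> L * m"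
    unfolding m_def l1_dist_commute[of h q] using L_nonneg by (simp_all add: mult_left_mono)
  ultimately have "\<bar>payoff P h q\<bar> \<le> L * m" "\<bar>payoff P p q\<bar> \<le> L * m"
    by (meson order_trans)+
  then have "\<bar>\<eta> * payoff P h q\<bar> \<le> \<eta> * L * m" "\<bar>\<eta> * payoff P p q\<bar> \<le> \<eta> * L * m"
    using eta_pos by (simp_all add: abs_mult mult.assoc)
  then show ?thesis
    using log_partition_bounds unfolding m_def[symmetric] by (simp add: abs_le_iff)
qed

lemma weighted_gradient_le:
  assumes w: "w = h \<or> w = p"
  shows "w a * \<bar>\<eta> * matvec P q a\<bar>
    \<le> exp (2 * \<eta> * L) * (l1_dist p q + l1_dist q h) + \<eta> * L * max (l1_dist p q) (l1_dist q h)"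
proof -
  define c where "c = log_partition \<eta> P h q"
  define x where "x = \<eta> * matvec P q a - c"
  have p_a: "p a = h a * exp x"
    unfolding p_def x_def c_def by (rule mw_step_eq_exp_log_partition[OF h_pos])
  have "\<bar>matvec P q a\<bar> \<le> L"
    using abs_matvec_le[of P L q a, OF P_bound] sum_abs_simplex[OF q_simplex] by simp
  then have "\<bar>\<eta> * matvec P q a\<bar> \<le> \<eta> * L"
    using eta_pos by (simp add: abs_mult)
  then have "\<bar>x\<bar> \<le> 2 * \<eta> * L"
    using abs_log_partition_le unfolding x_def c_def by (simp add: abs_le_iff)
  then have exp_x: "exp \<bar>x\<bar> \<le> exp (2 * \<eta> * L)" by simp
  have "w a * \<bar>x\<bar> \<le> \<bar>p a - h a\<bar> * exp \<bar>x\<bar>"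
    using tilted_weight_mult_abs_le[OF h_pos[of a], of "w a" x] w p_a by auto
  also have "\<dots> \<le> (l1_dist p q + l1_dist q h) * exp (2 * \<eta> * L)"
  proof (rule mult_mono[OF _ exp_x])
    show "\<bar>p a - h a\<bar> \<le> l1_dist p q + l1_dist q h"
      using abs_le_l1_dist[of p a q] abs_le_l1_dist[of q a h] by linarith
  qed (auto simp: l1_dist_def sum_nonneg)
  finally have w_x: "w a * \<bar>x\<bar> \<le> exp (2 * \<eta> * L) * (l1_dist p q + l1_dist q h)"
    by (simp add: mult.commute)
  have "0 \<le> w a" "w a \<le> 1"
    using w prob_simplexD(1) prob_simplex_le_one h_simplex p_simplex by auto
  moreover have "\<bar>\<eta> * matvec P q a\<bar> \<le> \<bar>x\<bar> + \<bar>c\<bar>"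
    using abs_triangle_ineq[of x c] unfolding x_def by simp
  ultimately have "w a * \<bar>\<eta> * matvec P q a\<bar> \<le> w a * \<bar>x\<bar> + w a * \<bar>c\<bar>"
    using mult_left_mono by (simp add: distrib_left[symmetric])
  also have "w a * \<bar>c\<bar> \<le> \<bar>c\<bar>"
    using \<open>0 \<le> w a\<close> \<open>w a \<le> 1\<close> by (simp add: mult_left_le_one_le)
  finally show ?thesis
    using w_x abs_log_partition_le_l1_dist unfolding c_def by linarith
qed

lemma Kval_le:
  assumes "w = h \<or> w = p"
  shows "Kval \<eta> P w q \<le> (sqrt 2 * \<eta> * L + 2 * exp (2 * \<eta> * L)) * sqrt (KL p q + KL q h)"
proof -
  define D where "D = KL p q + KL q h"
  have "l1_dist p q + l1_dist q h \<le> 2 * sqrt D" "max (l1_dist p q) (l1_dist q h) \<le> sqrt 2 * sqrt D"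
    unfolding D_def
    using sqrt_bounds_of_sq_le[OF _ _ Pinsker_inequality[OF p_simplex q_simplex q_pos]
        Pinsker_inequality[OF q_simplex h_simplex h_pos]]
    by (auto simp: l1_dist_def sum_nonneg)
  then have "exp (2 * \<eta> * L) * (l1_dist p q + l1_dist q h) + \<eta> * L * max (l1_dist p q) (l1_dist q h)
      \<le> exp (2 * \<eta> * L) * (2 * sqrt D) + \<eta> * L * (sqrt 2 * sqrt D)"
    using eta_pos L_nonneg by (intro add_mono mult_left_mono) auto
  also have "\<dots> = (sqrt 2 * \<eta> * L + 2 * exp (2 * \<eta> * L)) * sqrt D"
    by (simp add: algebra_simps)
  finally have "w a * \<bar>\<eta> * matvec P q a\<bar> \<le> (sqrt 2 * \<eta> * L + 2 * exp (2 * \<eta> * L)) * sqrt D" for a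
    using weighted_gradient_le[OF assms, of a] by linarith
  then show ?thesis unfolding Kval_def D_def by (simp add: Max_le_iff)
qed

lemma Kval_nonneg: "Kval \<eta> P h q \<ge> 0"
proof -
  have "h a * \<bar>\<eta> * matvec P q a\<bar> \<le> Kval \<eta> P h q" for a
    unfolding Kval_def by (rule Max_ge) auto
  moreover have "0 \<le> h a * \<bar>\<eta> * matvec P q a\<bar>" for a
    using h_pos[of a] by simp
  ultimately show ?thesis by (meson order_trans)
qed

theorem Theta_decrease_ge_Kval:
  assumes "u \<in> nash_set P" and "\<eta> * L \<le> 1/2"
  shows "Theta \<eta> L u h r - Theta \<eta> L u p q
    \<ge> (1 - 4 * \<eta>\<^sup>2 * L\<^sup>2) / (sqrt 2 * \<eta> * L + 2 * exp (2 * \<eta> * L))\<^sup>2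
       * (max (Kval \<eta> P h q) (Kval \<eta> P p q))\<^sup>2"
proof -
  define B where "B = sqrt 2 * \<eta> * L + 2 * exp (2 * \<eta> * L)"
  define D where "D = KL p q + KL q h"
  define M where "M = max (Kval \<eta> P h q) (Kval \<eta> P p q)"
  have B_pos: "B > 0"
    unfolding B_def using eta_pos L_nonneg by (simp add: add_nonneg_pos)
  have D_nonneg: "D \<ge> 0"
    unfolding D_def using KL_nonneg[OF p_simplex q_simplex q_pos] KL_nonneg[OF q_simplex h_simplex h_pos]
    by simp
  have "0 \<le> M" "M \<le> B * sqrt D"
    unfolding M_def B_def D_def using Kval_nonneg Kval_le by auto
  then have "M\<^sup>2 \<le> B\<^sup>2 * D"
    using power_mono[of M "B * sqrt D" 2] D_nonneg by (simp add: power_mult_distrib)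
  then have "M\<^sup>2 / B\<^sup>2 \<le> D"
    using B_pos by (simp add: divide_le_eq mult.commute)
  moreover have "0 \<le> 1 - 4 * \<eta>\<^sup>2 * L\<^sup>2"
  proof -
    have "(\<eta> * L)\<^sup>2 \<le> (1/2)\<^sup>2"
      using assms(2) eta_pos L_nonneg by (intro power_mono) auto
    then show ?thesis by (simp add: power_mult_distrib power2_eq_square algebra_simps)
  qed
  ultimately have "(1 - 4 * \<eta>\<^sup>2 * L\<^sup>2) * (M\<^sup>2 / B\<^sup>2) \<le> (1 - 4 * \<eta>\<^sup>2 * L\<^sup>2) * D"
    by (rule mult_left_mono)
  then have "(1 - 4 * \<eta>\<^sup>2 * L\<^sup>2) / B\<^sup>2 * M\<^sup>2 \<le> (1 - 4 * \<eta>\<^sup>2 * L\<^sup>2) * D"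
    by simp
  also have "\<dots> \<le> Theta \<eta> L u h r - Theta \<eta> L u p q"
    unfolding D_def by (rule Theta_decrease_ge_KL[OF assms(1)])
  finally show ?thesis unfolding B_def M_def .
qed

end

lemma omwu_iterates:
  fixes pihat pis :: "nat \<Rightarrow> 'a::finite \<Rightarrow> real"
  assumes init_simplex: "pihat 1 \<in> prob_simplex" and init_pos: "\<forall>a. pihat 1 a > 0"
    and init_pi: "pis 0 = pihat 1"
    and upd_pi: "\<forall>s\<ge>1. pis s = mw_step \<eta> P (pihat s) (pis (s - 1))"
    and upd_hat: "\<forall>s\<ge>1. pihat (s + 1) = mw_step \<eta> P (pihat s) (pis s)"
  shows "s \<ge> 1 \<Longrightarrow> pihat s \<in> prob_simplex \<and> (\<forall>a. pihat s a > 0)"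
    and "pis s \<in> prob_simplex \<and> (\<forall>a. pis s a > 0)"
proof -
  have hat: "pihat (Suc n) \<in> prob_simplex \<and> (\<forall>a. pihat (Suc n) a > 0)" for n
  proof (induction n)
    case 0
    then show ?case using init_simplex init_pos by simp
  next
    case (Suc n)
    then show ?case
      using upd_hat[rule_format, of "Suc n"] by (simp add: mw_step_simplex mw_step_pos)
  qed
  show "pihat s \<in> prob_simplex \<and> (\<forall>a. pihat s a > 0)" if "s \<ge> 1"
    using hat[of "s - 1"] that by simp
  show "pis s \<in> prob_simplex \<and> (\<forall>a. pis s a > 0)"
  proof (cases s)
    case 0
    then show ?thesis using init_pi init_simplex init_pos by simp
  next
    case (Suc n)
    then show ?thesis
      using upd_pi[rule_format, of s] hat[of n] by (simp add: mw_step_simplex mw_step_pos)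
  qed
qed

theorem mainTheorem16:
  fixes P :: "'a::finite \<Rightarrow> 'a \<Rightarrow> real"
    and \<eta> :: real
    and pihat pis :: "nat \<Rightarrow> 'a \<Rightarrow> real"
    and t :: nat
  assumes skew: "skew_symmetric P"
    and full_support: "\<forall>a. \<exists>\<pi>\<in>nash_set P. \<pi> a > 0"
    and eta_pos: "\<eta> > 0"
    and eta_L: "\<eta> * Lconst P < 1/2"
    and init_simplex: "pihat 1 \<in> prob_simplex"
    and init_pos: "\<forall>a. pihat 1 a > 0"
    and init_pi: "pis 0 = pihat 1"
    and upd_pi: "\<forall>s\<ge>1. pis s = mw_step \<eta> P (pihat s) (pis (s - 1))"
    and upd_hat: "\<forall>s\<ge>1. pihat (s + 1) = mw_step \<eta> P (pihat s) (pis s)"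
    and t_ge: "t \<ge> 1"
  shows "Theta \<eta> (Lconst P) (kl_proj P (pihat 1)) (pihat t) (pis (t - 1))
           - Theta \<eta> (Lconst P) (kl_proj P (pihat 1)) (pihat (t + 1)) (pis t)
         \<ge> (1 - 4 * \<eta>^2 * (Lconst P)^2) / (sqrt 2 * \<eta> * Lconst P + 2 * exp (2 * \<eta> * Lconst P))^2
             * (max (Kval \<eta> P (pihat t) (pis t)) (Kval \<eta> P (pihat (t + 1)) (pis t)))^2"
proof -
  note iterates = omwu_iterates[OF init_simplex init_pos init_pi upd_pi upd_hat]
  interpret omwu_step P \<eta> "Lconst P" "pihat t" "pis (t - 1)" "pis t" "pihat (t + 1)"
    using skew abs_le_Lconst eta_pos iterates(1)[OF t_ge] iterates(2)[of "t - 1"] upd_pi upd_hat t_ge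
    by unfold_locales auto
  have "kl_proj P (pihat 1) \<in> nash_set P"
    using kl_proj_in_nash_set full_support init_pos by blast
  then show ?thesis
    using Theta_decrease_ge_Kval eta_L by simp
qed

end
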